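(* Let $\mathcal P=\{p_0,\dots,p_6\}$ be a typical heptagonal $7$-configuration with a cyclic numeration (indices modulo $7$). Then $d(p_i)+d(p_{i+1})=5$ if the edge $[p_i,p_{i+1}]$ is internal, and $d(p_i)+d(p_{i+1})=7$ if it is external.
   Context: A $7$-configuration is a set of $7$ distinct points in $\mathbb{RP}^2$; it is typical if no three of its points are collinear and no six lie on a common conic. It is heptagonal if there is a line $\ell$ disjoint from it such that its points are the vertices of a convex heptagon in $\mathbb{RP}^2\smallsetminus\ell$; a cyclic numeration lists the points as consecutive vertices of this heptagon. For $i\ne j$ let $Q_{i,j}$ be the conic through the five points of $\mathcal P\smallsetminus\{p_i,p_j\}$, and set $d_{i,j}=0$ if $p_i$ lies inside $Q_{i,j}$ and $d_{i,j}=1$ if outside ("inside" = the component of the complement homeomorphic to a disc). The dominance index is $d(p_i)=\sum_{j\ne i}d_{i,j}$. The edge $[p_i,p_{i+1}]$ is internal if $d_{i,i+1}=d_{i+1,i}=0$ and external if $d_{i,i+1}=d_{i+1,i}=1$. *)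

theory Defs
  imports "HOL-Analysis.Analysis"
begin

text \<open>Points of RP^2 are represented by nonzero vectors of real^3 (homogeneous
coordinates). A 7-configuration is given by representatives p 0, ..., p 6.\<close>

definition det3 :: "real^3 \<Rightarrow> real^3 \<Rightarrow> real^3 \<Rightarrow> real" where
  "det3 u v w =
     u$1 * (v$2 * w$3 - v$3 * w$2) - u$2 * (v$1 * w$3 - v$3 * w$1)
     + u$3 * (v$1 * w$2 - v$2 * w$1)"

definition proj_eq :: "real^3 \<Rightarrow> real^3 \<Rightarrow> bool" where
  "proj_eq u v \<longleftrightarrow> (\<exists>c::real. c \<noteq> 0 \<and> v = c *\<^sub>R u)"

definition config7 :: "(nat \<Rightarrow> real^3) \<Rightarrow> bool" where
  "config7 p \<longleftrightarrow> (\<forall>i<7. p i \<noteq> 0) \<and>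
     (\<forall>i<7. \<forall>j<7. i \<noteq> j \<longrightarrow> \<not> proj_eq (p i) (p j))"

text \<open>Quadratic form of a (symmetric) 3x3 matrix; conics are zero sets of
nonzero quadratic forms.\<close>
definition qf :: "real^3^3 \<Rightarrow> real^3 \<Rightarrow> real" where
  "qf Q v = v \<bullet> (Q *v v)"

definition conic_through :: "real^3^3 \<Rightarrow> (real^3) set \<Rightarrow> bool" where
  "conic_through Q S \<longleftrightarrow> Q \<noteq> 0 \<and> transpose Q = Q \<and> (\<forall>v\<in>S. qf Q v = 0)"

definition typical7 :: "(nat \<Rightarrow> real^3) \<Rightarrow> bool" where
  "typical7 p \<longleftrightarrow> config7 p \<and>
     (\<forall>i<7. \<forall>j<7. \<forall>k<7. i \<noteq> j \<and> j \<noteq> k \<and> i \<noteq> k \<longrightarrow> det3 (p i) (p j) (p k) \<noteq> 0) \<and>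
     (\<forall>S. S \<subseteq> {0..<7} \<and> card S = 6 \<longrightarrow> \<not> (\<exists>Q. conic_through Q (p ` S)))"

text \<open>Affine chart RP^2 minus the line {a . v = 0}: the point [v] is identified with
the point v/(a . v) of the affine plane {x. a . x = 1}.\<close>
definition chart :: "real^3 \<Rightarrow> real^3 \<Rightarrow> real^3" where
  "chart a v = (1 / (a \<bullet> v)) *\<^sub>R v"

text \<open>p 0, ..., p 6 (indices mod 7) are consecutive vertices of a convex heptagon in
RP^2 minus the line a: for each edge [p i, p (i+1)], all other vertices lie strictly
on one side of the line through it (inside the affine plane {a . x = 1}, the side of
x w.r.t. the line through u, w is the sign of det3 u w x).\<close>
definition cyclic_heptagonal :: "(nat \<Rightarrow> real^3) \<Rightarrow> bool" where
  "cyclic_heptagonal p \<longleftrightarrow> (\<exists>a::real^3. a \<noteq> 0 \<and> (\<forall>i<7. a \<bullet> p i \<noteq> 0) \<and>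
     (\<forall>i<7.
        (\<forall>k<7. k \<noteq> i \<and> k \<noteq> (i+1) mod 7 \<longrightarrow>
            det3 (chart a (p i)) (chart a (p ((i+1) mod 7))) (chart a (p k)) > 0) \<or>
        (\<forall>k<7. k \<noteq> i \<and> k \<noteq> (i+1) mod 7 \<longrightarrow>
            det3 (chart a (p i)) (chart a (p ((i+1) mod 7))) (chart a (p k)) < 0)))"

text \<open>Inside of a nondegenerate real conic {qf Q = 0}: the disc component of its
complement, i.e. the points where qf Q has the sign of det Q (e.g. for
x^2+y^2-z^2, det = -1, the disc is x^2+y^2 < z^2).\<close>
definition inside_conic :: "real^3^3 \<Rightarrow> real^3 \<Rightarrow> bool" where
  "inside_conic Q v \<longleftrightarrow> det Q * qf Q v > 0"

definition Qc :: "(nat \<Rightarrow> real^3) \<Rightarrow> nat \<Rightarrow> nat \<Rightarrow> real^3^3" where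
  "Qc p i j = (SOME Q. conic_through Q (p ` ({0..<7} - {i, j})))"

definition dd :: "(nat \<Rightarrow> real^3) \<Rightarrow> nat \<Rightarrow> nat \<Rightarrow> nat" where
  "dd p i j = (if inside_conic (Qc p i j) (p i) then 0 else 1)"

definition dom_index :: "(nat \<Rightarrow> real^3) \<Rightarrow> nat \<Rightarrow> nat" where
  "dom_index p i = (\<Sum>j\<in>{0..<7} - {i}. dd p i j)"

definition internal_edge :: "(nat \<Rightarrow> real^3) \<Rightarrow> nat \<Rightarrow> bool" where
  "internal_edge p i \<longleftrightarrow> dd p i ((i+1) mod 7) = 0 \<and> dd p ((i+1) mod 7) i = 0"

definition external_edge :: "(nat \<Rightarrow> real^3) \<Rightarrow> nat \<Rightarrow> bool" where
  "external_edge p i \<longleftrightarrow> dd p i ((i+1) mod 7) = 1 \<and> dd p ((i+1) mod 7) i = 1"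

end

theory Submission
  imports Defs
begin

text \<open>For j \<noteq> i, i+1 the conics Q_{i,j} and Q_{i+1,j} pass through the same four
  points C, D, E, F, so they are the members through p_{i+1} and p_i of the pencil spanned
  by the line pairs CD \<union> EF and CE \<union> DF. In this pencil the sign of det Q \<cdot> Q(X) is an
  explicit product: the value at U of the member through V is antisymmetric in U and V,
  and the remaining factors are the six lines through two of C, D, E, F, which have the
  same sign at two consecutive vertices of a convex polygon. Hence p_i is inside Q_{i,j}
  iff p_{i+1} is outside Q_{i+1,j}, so d_{i,j} + d_{i+1,j} = 1 for the five such j, and
  d(p_i) + d(p_{i+1}) = d_{i,i+1} + d_{i+1,i} + 5.\<close>

definition polar_form :: "real^3^3 \<Rightarrow> real^3 \<Rightarrow> real^3 \<Rightarrow> real" where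
  "polar_form Q y z = y \<bullet> (Q *v z)"

lemma qf_eq_polar_form: "qf Q v = polar_form Q v v"
  by (simp add: qf_def polar_form_def)

lemma polar_form_commute:
  assumes "transpose Q = Q"
  shows "polar_form Q y z = polar_form Q z y"
proof -
  have "polar_form Q y z = (transpose Q *v y) \<bullet> z"
    by (simp add: polar_form_def dot_lmul_matrix)
  with assms show ?thesis
    by (simp add: polar_form_def inner_commute)
qed

lemma polar_form_scaleR: "polar_form (c *\<^sub>R Q) y z = c * polar_form Q y z"
  by (simp add: polar_form_def scaleR_matrix_vector_assoc[symmetric])

lemma polar_form_diff: "polar_form (Q1 - Q2) y z = polar_form Q1 y z - polar_form Q2 y z"
  by (simp add: polar_form_def matrix_vector_mult_diff_rdistrib inner_diff_right)

lemma qf_scaleR: "qf (c *\<^sub>R Q) v = c * qf Q v"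
  by (simp add: qf_eq_polar_form polar_form_scaleR)

lemma qf_diff: "qf (Q1 - Q2) v = qf Q1 v - qf Q2 v"
  by (simp add: qf_eq_polar_form polar_form_diff)

lemma qf_scaleR_vector: "qf Q (c *\<^sub>R v) = c\<^sup>2 * qf Q v"
  by (simp add: qf_def matrix_vector_mult_scaleR power2_eq_square)

lemma det_scaleR_3: "det (c *\<^sub>R Q :: real^3^3) = c ^ 3 * det Q"
  by (simp add: det_3 algebra_simps power3_eq_cube)

lemma det3_eq_det: "det3 A B C = det (vector [A, B, C] :: real^3^3)"
  by (simp add: det_3 det3_def algebra_simps)

lemma det3_eq_cross3: "det3 u v w = cross3 u v \<bullet> w"
  by (simp add: cross3_simps det3_def)

lemma det3_same [simp]: "det3 x y x = 0" "det3 x x y = 0" "det3 x y y = 0"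
  by (simp_all add: det3_def algebra_simps)

lemma det3_swap: "det3 x y z = - det3 x z y"
  by (simp add: det3_def algebra_simps)

lemma det3_swap_left: "det3 x y z = - det3 y x z"
  by (simp add: det3_def algebra_simps)

lemma det3_rotate: "det3 x y z = det3 z x y"
  by (simp add: det3_def algebra_simps)

lemma det3_pluecker:
  "det3 C D Y * det3 E F Y - det3 C E Y * det3 D F Y + det3 C F Y * det3 D E Y = 0"
  by (simp add: det3_def algebra_simps)

lemma det_conic_through_three_points:
  assumes "transpose Q = Q" "qf Q A = 0" "qf Q B = 0" "qf Q C = 0"
  shows "(det3 A B C)\<^sup>2 * det Q = 2 * polar_form Q A B * polar_form Q B C * polar_form Q A C"
proof -
  define R where "R = (vector [A, B, C] :: real^3^3)"
  \<comment> \<open>\<open>R Q R\<^sup>T\<close> is the Gram matrix of the polar form at \<open>A, B, C\<close>; its diagonal vanishes.\<close>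
  have entry: "(R ** Q ** transpose R)$i$j = polar_form Q (R$i) (R$j)" for i j
    by (simp add: matrix_matrix_mult_def transpose_def polar_form_def inner_vec_def
        matrix_vector_mult_def sum_3 algebra_simps)
  have "(det3 A B C)\<^sup>2 * det Q = det (R ** Q ** transpose R)"
    by (simp add: det_mul R_def det3_eq_det power2_eq_square)
  also have "\<dots> = 2 * polar_form Q A B * polar_form Q B C * polar_form Q A C"
    unfolding det_3 entry using assms
    by (simp add: R_def qf_eq_polar_form polar_form_commute[OF assms(1), of B A]
        polar_form_commute[OF assms(1), of C A] polar_form_commute[OF assms(1), of C B])
  finally show ?thesis .
qed

lemma inside_conic_iff_polar_form:
  assumes "conic_through Q S" "A \<in> S" "B \<in> S" "C \<in> S" "det3 A B C \<noteq> 0"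
  shows "inside_conic Q X \<longleftrightarrow>
    0 < polar_form Q A B * polar_form Q B C * polar_form Q A C * qf Q X"
proof -
  have det: "(det3 A B C)\<^sup>2 * det Q = 2 * polar_form Q A B * polar_form Q B C * polar_form Q A C"
    using assms by (intro det_conic_through_three_points) (auto simp: conic_through_def)
  have "inside_conic Q X \<longleftrightarrow> 0 < (det3 A B C)\<^sup>2 * (det Q * qf Q X)"
    using assms(5) unfolding inside_conic_def by (simp add: zero_less_mult_iff)
  also have "(det3 A B C)\<^sup>2 * (det Q * qf Q X)
      = 2 * (polar_form Q A B * polar_form Q B C * polar_form Q A C * qf Q X)"
    unfolding mult.assoc[symmetric] det ..
  finally show ?thesis
    by (simp add: mult_ac)
qed

lemma inside_conic_scaleR:
  assumes "c \<noteq> 0"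
  shows "inside_conic (c *\<^sub>R Q) X \<longleftrightarrow> inside_conic Q X"
proof -
  have "det (c *\<^sub>R Q) * qf (c *\<^sub>R Q) X = c ^ 4 * (det Q * qf Q X)"
    by (simp add: det_scaleR_3 qf_scaleR power_numeral_reduce)
  then show ?thesis
    using assms unfolding inside_conic_def by (simp add: zero_less_mult_iff)
qed

lemma inside_conic_scaleR_point:
  assumes "c \<noteq> 0"
  shows "inside_conic Q (c *\<^sub>R v) \<longleftrightarrow> inside_conic Q v"
proof -
  have "det Q * qf Q (c *\<^sub>R v) = c\<^sup>2 * (det Q * qf Q v)"
    by (simp add: qf_scaleR_vector)
  with assms show ?thesis
    unfolding inside_conic_def by (simp only:) (simp add: zero_less_mult_iff)
qed

lemma transpose_diff: "transpose (A - B) = transpose A - transpose (B :: 'a::ab_group_add^'n^'m)"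
  by (simp add: transpose_def vec_eq_iff)

lemma conic_through_unique:
  assumes no_conic: "\<nexists>Q. conic_through Q (insert U S)"
    and Q: "conic_through Q S" and Q': "conic_through Q' S"
  shows "\<exists>c. c \<noteq> 0 \<and> Q = c *\<^sub>R Q'"
proof -
  have nonzero: "qf Q' U \<noteq> 0"
    using Q' no_conic by (auto simp: conic_through_def)
  have proportional: "qf Q' U *\<^sub>R Q = qf Q U *\<^sub>R Q'"
  proof (rule ccontr)
    assume "qf Q' U *\<^sub>R Q \<noteq> qf Q U *\<^sub>R Q'"
    with Q Q' have "conic_through (qf Q U *\<^sub>R Q' - qf Q' U *\<^sub>R Q) (insert U S)"
      by (simp add: conic_through_def qf_diff qf_scaleR transpose_diff transpose_scalar)
    with no_conic show False
      by blast
  qed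
  have "Q = inverse (qf Q' U) *\<^sub>R (qf Q' U *\<^sub>R Q)"
    using nonzero by simp
  also have "\<dots> = (qf Q U / qf Q' U) *\<^sub>R Q'"
    by (simp add: proportional divide_inverse mult.commute)
  finally have "Q = (qf Q U / qf Q' U) *\<^sub>R Q'" .
  moreover have "qf Q U / qf Q' U \<noteq> 0"
    using Q calculation by (auto simp: conic_through_def)
  ultimately show ?thesis
    by blast
qed

definition line_pair :: "real^3 \<Rightarrow> real^3 \<Rightarrow> real^3^3" where
  "line_pair g h = (\<chi> i j. (g$i * h$j + g$j * h$i) / 2)"

lemma polar_form_line_pair:
  "polar_form (line_pair g h) y z = ((g \<bullet> y) * (h \<bullet> z) + (g \<bullet> z) * (h \<bullet> y)) / 2"
  by (simp add: line_pair_def polar_form_def inner_vec_def matrix_vector_mult_def sum_3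
      algebra_simps add_divide_distrib)

lemma transpose_line_pair: "transpose (line_pair g h) = line_pair g h"
  by (simp add: line_pair_def transpose_def vec_eq_iff algebra_simps)

text \<open>The member through \<open>Y\<close> of the pencil of conics through \<open>C, D, E, F\<close>, spanned by
  the line pairs \<open>CD \<union> EF\<close> and \<open>CE \<union> DF\<close>.\<close>

definition pencil_conic :: "real^3 \<Rightarrow> real^3 \<Rightarrow> real^3 \<Rightarrow> real^3 \<Rightarrow> real^3 \<Rightarrow> real^3^3" where
  "pencil_conic C D E F Y =
     (let L = line_pair (cross3 C D) (cross3 E F); M = line_pair (cross3 C E) (cross3 D F)
      in qf L Y *\<^sub>R M - qf M Y *\<^sub>R L)"

lemma polar_form_pencil_conic:
  "polar_form (pencil_conic C D E F Y) Z W =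
     det3 C D Y * det3 E F Y * (det3 C E Z * det3 D F W + det3 C E W * det3 D F Z) / 2
   - det3 C E Y * det3 D F Y * (det3 C D Z * det3 E F W + det3 C D W * det3 E F Z) / 2"
  by (simp add: pencil_conic_def Let_def polar_form_diff polar_form_scaleR qf_eq_polar_form
      polar_form_line_pair det3_eq_cross3)

lemma qf_pencil_conic:
  "qf (pencil_conic C D E F Y) X =
     det3 C D Y * det3 E F Y * det3 C E X * det3 D F X
   - det3 C E Y * det3 D F Y * det3 C D X * det3 E F X"
  by (simp add: qf_eq_polar_form polar_form_pencil_conic)

lemma transpose_pencil_conic: "transpose (pencil_conic C D E F Y) = pencil_conic C D E F Y"
  by (simp add: pencil_conic_def Let_def transpose_diff transpose_scalar transpose_line_pair)

lemma polar_form_pencil_conic_CD: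
  "polar_form (pencil_conic C D E F Y) C D =
     - det3 C D Y * det3 E F Y * det3 C D E * det3 C D F / 2"
  by (simp add: polar_form_pencil_conic det3_swap[of C E D] det3_rotate[of D F C])

lemma polar_form_pencil_conic_DE:
  "polar_form (pencil_conic C D E F Y) D E =
     - det3 C F Y * det3 D E Y * det3 C D E * det3 D E F / 2"
proof -
  have "polar_form (pencil_conic C D E F Y) D E =
      (det3 C D Y * det3 E F Y - det3 C E Y * det3 D F Y) * det3 C D E * det3 D E F / 2"
    by (simp add: polar_form_pencil_conic det3_swap[of C E D] det3_swap[of D F E]
        det3_rotate[of E F D] algebra_simps)
  also have "det3 C D Y * det3 E F Y - det3 C E Y * det3 D F Y = - (det3 C F Y * det3 D E Y)"
    using det3_pluecker[of C D Y E F] by linarith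
  finally show ?thesis
    by simp
qed

lemma polar_form_pencil_conic_CE:
  "polar_form (pencil_conic C D E F Y) C E =
     - det3 C E Y * det3 D F Y * det3 C D E * det3 C E F / 2"
  by (simp add: polar_form_pencil_conic det3_rotate[of E F C])

lemma pencil_conic_through:
  assumes "det3 C D Y \<noteq> 0" "det3 E F Y \<noteq> 0" "det3 C D E \<noteq> 0" "det3 C D F \<noteq> 0"
  shows "conic_through (pencil_conic C D E F Y) {Y, C, D, E, F}"
proof -
  have "pencil_conic C D E F Y \<noteq> 0"
  proof
    assume "pencil_conic C D E F Y = 0"
    then have "polar_form (pencil_conic C D E F Y) C D = 0"
      by (simp add: polar_form_def)
    with assms show False
      by (simp add: polar_form_pencil_conic_CD)
  qed
  then show ?thesis
    by (simp add: conic_through_def transpose_pencil_conic qf_pencil_conic)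
qed

lemma qf_pencil_conic_antisym:
  "qf (pencil_conic C D E F U) V = - qf (pencil_conic C D E F V) U"
  by (simp add: qf_pencil_conic algebra_simps)

lemma inside_pencil_conic_iff:
  assumes "det3 C D Y \<noteq> 0" "det3 E F Y \<noteq> 0" "det3 C D E \<noteq> 0" "det3 C D F \<noteq> 0"
  shows "inside_conic (pencil_conic C D E F Y) X \<longleftrightarrow>
    0 < - (det3 C D E ^ 3 * det3 C D F * det3 C E F * det3 D E F)
        * (det3 C D Y * det3 E F Y * det3 C E Y * det3 D F Y * det3 C F Y * det3 D E Y)
        * qf (pencil_conic C D E F Y) X"
    (is "_ \<longleftrightarrow> 0 < ?rhs")
proof -
  let ?P = "pencil_conic C D E F Y"
  have "inside_conic ?P X \<longleftrightarrow>
      0 < polar_form ?P C D * polar_form ?P D E * polar_form ?P C E * qf ?P X"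
    using assms by (intro inside_conic_iff_polar_form[OF pencil_conic_through]) auto
  also have "polar_form ?P C D * polar_form ?P D E * polar_form ?P C E * qf ?P X = ?rhs / 8"
    by (simp add: polar_form_pencil_conic_CD polar_form_pencil_conic_DE polar_form_pencil_conic_CE
        power3_eq_cube field_simps)
  finally show ?thesis
    by simp
qed

lemma inside_pencil_conic_exchange:
  assumes general: "det3 C D E \<noteq> 0" "det3 C D F \<noteq> 0" "det3 C E F \<noteq> 0" "det3 D E F \<noteq> 0"
    and same_side: "0 < det3 C D U * det3 C D V" "0 < det3 E F U * det3 E F V"
      "0 < det3 C E U * det3 C E V" "0 < det3 D F U * det3 D F V"
      "0 < det3 C F U * det3 C F V" "0 < det3 D E U * det3 D E V"
    and "qf (pencil_conic C D E F V) U \<noteq> 0"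
  shows "inside_conic (pencil_conic C D E F V) U \<longleftrightarrow> \<not> inside_conic (pencil_conic C D E F U) V"
proof -
  define K where "K = det3 C D E ^ 3 * det3 C D F * det3 C E F * det3 D E F"
  define g where
    "g Y = det3 C D Y * det3 E F Y * det3 C E Y * det3 D F Y * det3 C F Y * det3 D E Y" for Y
  define T where "T = qf (pencil_conic C D E F V) U"
  have nonzero: "det3 C D U \<noteq> 0" "det3 E F U \<noteq> 0" "det3 C D V \<noteq> 0" "det3 E F V \<noteq> 0"
    using same_side(1,2) by auto
  have inside_V: "inside_conic (pencil_conic C D E F V) U \<longleftrightarrow> 0 < - K * g V * T"
    unfolding K_def g_def T_def using nonzero general by (intro inside_pencil_conic_iff)
  have "inside_conic (pencil_conic C D E F U) V \<longleftrightarrow>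
      0 < - K * g U * qf (pencil_conic C D E F U) V"
    unfolding K_def g_def using nonzero general by (intro inside_pencil_conic_iff)
  then have inside_U: "inside_conic (pencil_conic C D E F U) V \<longleftrightarrow> 0 < K * g U * T"
    by (simp add: T_def qf_pencil_conic_antisym[of C D E F U V])
  have "0 < (K * T)\<^sup>2"
    using general \<open>qf (pencil_conic C D E F V) U \<noteq> 0\<close> by (simp add: K_def T_def)
  moreover have "g U * g V = (det3 C D U * det3 C D V) * (det3 E F U * det3 E F V)
      * (det3 C E U * det3 C E V) * (det3 D F U * det3 D F V)
      * (det3 C F U * det3 C F V) * (det3 D E U * det3 D E V)"
    by (simp add: g_def mult_ac)
  then have "0 < g U * g V"
    using same_side by simp
  ultimately have "0 < (K * T)\<^sup>2 * (g U * g V)"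
    by (rule mult_pos_pos)
  moreover have "(- K * g V * T) * (K * g U * T) = - ((K * T)\<^sup>2 * (g U * g V))"
    by (simp add: power2_eq_square mult_ac)
  ultimately have "(- K * g V * T) * (K * g U * T) < 0"
    by linarith
  then have "0 < - K * g V * T \<longleftrightarrow> \<not> 0 < K * g U * T"
    using mult_less_0_iff[of "- K * g V * T" "K * g U * T"] by linarith
  then show ?thesis
    unfolding inside_V inside_U .
qed

lemma inside_conic_exchange:
  assumes no_conic: "\<nexists>Q. conic_through Q {U, V, C, D, E, F}"
    and Q1: "conic_through Q1 {V, C, D, E, F}" and Q2: "conic_through Q2 {U, C, D, E, F}"
    and general: "det3 C D E \<noteq> 0" "det3 C D F \<noteq> 0" "det3 C E F \<noteq> 0" "det3 D E F \<noteq> 0"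
    and same_side: "0 < det3 C D U * det3 C D V" "0 < det3 E F U * det3 E F V"
      "0 < det3 C E U * det3 C E V" "0 < det3 D F U * det3 D F V"
      "0 < det3 C F U * det3 C F V" "0 < det3 D E U * det3 D E V"
  shows "inside_conic Q1 U \<longleftrightarrow> \<not> inside_conic Q2 V"
proof -
  have "det3 C D U \<noteq> 0" "det3 E F U \<noteq> 0" "det3 C D V \<noteq> 0" "det3 E F V \<noteq> 0"
    using same_side(1,2) by auto
  then have PV: "conic_through (pencil_conic C D E F V) {V, C, D, E, F}"
    and PU: "conic_through (pencil_conic C D E F U) {U, C, D, E, F}"
    using general by (auto intro!: pencil_conic_through)
  obtain c1 where "c1 \<noteq> 0" "Q1 = c1 *\<^sub>R pencil_conic C D E F V"
    using conic_through_unique[OF _ Q1 PV] no_conic by auto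
  moreover obtain c2 where "c2 \<noteq> 0" "Q2 = c2 *\<^sub>R pencil_conic C D E F U"
    using conic_through_unique[of V "{U, C, D, E, F}" Q2] Q2 PU no_conic
    by (auto simp: insert_commute)
  moreover have "qf (pencil_conic C D E F V) U \<noteq> 0"
    using PV no_conic unfolding conic_through_def by auto
  ultimately show ?thesis
    using inside_pencil_conic_exchange[OF general same_side] by (simp add: inside_conic_scaleR)
qed

lemma det3_transitive:
  assumes "0 < s * det3 x e v" "0 < s * det3 x e w" "0 < s * det3 x e z"
    and "0 < s * det3 x v w" "0 < s * det3 x w z"
  shows "0 < s * det3 x v z"
proof -
  have pluecker: "det3 x e w * det3 x v z = det3 x e v * det3 x w z + det3 x e z * det3 x v w"
    using det3_pluecker[of e v x w z] by (simp add: det3_rotate[of _ _ x])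
  have "(s * det3 x e w) * (s * det3 x v z) = s * s * (det3 x e w * det3 x v z)"
    by (simp only: mult_ac)
  also have "\<dots> = (s * det3 x e v) * (s * det3 x w z) + (s * det3 x e z) * (s * det3 x v w)"
    unfolding pluecker by (simp add: algebra_simps)
  also have "\<dots> > 0"
    using assms by (simp add: add_pos_pos)
  finally show ?thesis
    using assms(2) by (simp add: zero_less_mult_iff)
qed

lemma convex_polygon_edge_orientation:
  fixes y :: "nat \<Rightarrow> real^3"
  assumes "3 \<le> n"
    and edges: "\<forall>i<n.
      (\<forall>k<n. k \<noteq> i \<and> k \<noteq> (i+1) mod n \<longrightarrow> det3 (y i) (y ((i+1) mod n)) (y k) > 0) \<or>
      (\<forall>k<n. k \<noteq> i \<and> k \<noteq> (i+1) mod n \<longrightarrow> det3 (y i) (y ((i+1) mod n)) (y k) < 0)"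
  obtains s :: real where
    "\<And>i k. i < n \<Longrightarrow> k < n \<Longrightarrow> k \<noteq> i \<Longrightarrow> k \<noteq> (i+1) mod n \<Longrightarrow>
      0 < s * det3 (y i) (y ((i+1) mod n)) (y k)"
proof -
  define \<sigma> :: "nat \<Rightarrow> real" where "\<sigma> i = (if \<forall>k<n. k \<noteq> i \<and> k \<noteq> (i+1) mod n \<longrightarrow>
    det3 (y i) (y ((i+1) mod n)) (y k) > 0 then 1 else -1)" for i
  have \<sigma>_cases: "\<sigma> i = 1 \<or> \<sigma> i = -1" for i
    by (simp add: \<sigma>_def)
  have side: "0 < \<sigma> i * det3 (y i) (y ((i+1) mod n)) (y k)"
    if "i < n" "k < n" "k \<noteq> i" "k \<noteq> (i+1) mod n" for i k
  proof (cases "\<forall>k<n. k \<noteq> i \<and> k \<noteq> (i+1) mod n \<longrightarrow> det3 (y i) (y ((i+1) mod n)) (y k) > 0")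
    case True
    with that show ?thesis
      by (simp add: \<sigma>_def)
  next
    case False
    with edges \<open>i < n\<close> have "\<forall>k<n. k \<noteq> i \<and> k \<noteq> (i+1) mod n \<longrightarrow>
      det3 (y i) (y ((i+1) mod n)) (y k) < 0"
      by blast
    with False that show ?thesis
      by (simp add: \<sigma>_def)
  qed
  have step: "\<sigma> (Suc i) = \<sigma> i" if "Suc i < n" for i
  proof -
    \<comment> \<open>Both edges see the triangle \<open>y i, y (i+1), y (i+2)\<close> with the same orientation.\<close>
    let ?w = "(i + 2) mod n"
    have "?w < n" "?w \<noteq> i" "?w \<noteq> Suc i" "(i + 1) mod n = Suc i" "(Suc i + 1) mod n = ?w"
      "i \<noteq> (Suc i + 1) mod n"
      using that \<open>3 \<le> n\<close> by (simp_all add: mod_if)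
    then have "0 < \<sigma> i * det3 (y i) (y (Suc i)) (y ?w)"
      and "0 < \<sigma> (Suc i) * det3 (y i) (y (Suc i)) (y ?w)"
      using that side[of i ?w] side[of "Suc i" i] det3_rotate[of "y (Suc i)" "y ?w" "y i"]
      by simp_all
    with \<sigma>_cases[of i] \<sigma>_cases[of "Suc i"] show ?thesis
      by auto
  qed
  have \<sigma>_const: "\<sigma> i = \<sigma> 0" if "i < n" for i
    using that by (induction i) (simp_all add: step)
  show thesis
  proof (rule that[of "\<sigma> 0"])
    fix i k
    assume "i < n" "k < n" "k \<noteq> i" "k \<noteq> (i+1) mod n"
    then show "0 < \<sigma> 0 * det3 (y i) (y ((i+1) mod n)) (y k)"
      using side[of i k] \<sigma>_const[of i] by simp
  qed
qed

text \<open>In an affine chart this says that the points are in convex position, in this order.\<close>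

definition uniformly_oriented :: "nat \<Rightarrow> real \<Rightarrow> (nat \<Rightarrow> real^3) \<Rightarrow> bool" where
  "uniformly_oriented n s y \<longleftrightarrow>
     (\<forall>i j k. i < j \<longrightarrow> j < k \<longrightarrow> k < n \<longrightarrow> 0 < s * det3 (y i) (y j) (y k))"

lemma convex_polygon_uniformly_oriented:
  fixes y :: "nat \<Rightarrow> real^3"
  assumes "3 \<le> n"
    and edges: "\<forall>i<n.
      (\<forall>k<n. k \<noteq> i \<and> k \<noteq> (i+1) mod n \<longrightarrow> det3 (y i) (y ((i+1) mod n)) (y k) > 0) \<or>
      (\<forall>k<n. k \<noteq> i \<and> k \<noteq> (i+1) mod n \<longrightarrow> det3 (y i) (y ((i+1) mod n)) (y k) < 0)"
  obtains s where "uniformly_oriented n s y"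
proof -
  obtain s where edge: "\<And>i k. i < n \<Longrightarrow> k < n \<Longrightarrow> k \<noteq> i \<Longrightarrow> k \<noteq> (i+1) mod n \<Longrightarrow>
      0 < s * det3 (y i) (y ((i+1) mod n)) (y k)"
    using convex_polygon_edge_orientation[OF assms] by blast
  have edge': "0 < s * det3 (y i) (y (i + 1)) (y k)"
    if "i + 1 < n" "k < n" "k \<noteq> i" "k \<noteq> i + 1" for i k
    using edge[of i k] that by simp
  have chain: "0 < s * det3 (y i) (y j) (y (j + d + 1))" if "i < j" "j + d + 1 < n" for d i j
    using that
  proof (induction d arbitrary: j)
    case 0
    then show ?case
      using edge'[of j i] det3_rotate[of "y j" "y (j + 1)" "y i"] by simp
  next
    case (Suc d)
    let ?k = "j + Suc d + 1"
    show ?case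
    proof (cases "j = i + 1")
      case True
      then show ?thesis
        using Suc.prems edge'[of i ?k] by simp
    next
      case False
      have "0 < s * det3 (y i) (y (i + 1)) (y j)" "0 < s * det3 (y i) (y (i + 1)) (y (j + 1))"
        "0 < s * det3 (y i) (y (i + 1)) (y ?k)"
        using Suc.prems False edge'[of i j] edge'[of i "j + 1"] edge'[of i ?k] by simp_all
      moreover have "0 < s * det3 (y i) (y j) (y (j + 1))"
        using Suc.prems edge'[of j i] det3_rotate[of "y j" "y (j + 1)" "y i"] by simp
      moreover have "0 < s * det3 (y i) (y (j + 1)) (y ?k)"
        using Suc.IH[of "j + 1"] Suc.prems by simp
      ultimately show ?thesis
        by (rule det3_transitive)
    qed
  qed
  have "uniformly_oriented n s y"
    unfolding uniformly_oriented_def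
  proof (intro allI impI)
    fix i j k :: nat
    assume "i < j" "j < k" "k < n"
    then show "0 < s * det3 (y i) (y j) (y k)"
      using chain[of i j "k - j - 1"] by simp
  qed
  with that show thesis .
qed

definition order_sign :: "nat \<Rightarrow> nat \<Rightarrow> nat \<Rightarrow> real" where
  "order_sign i j k =
    (if i < j then 1 else -1) * (if j < k then 1 else -1) * (if i < k then 1 else -1)"

lemma det3_order_sign:
  assumes oriented: "uniformly_oriented n s y"
    and "i < n" "j < n" "k < n" "i \<noteq> j" "j \<noteq> k" "i \<noteq> k"
  shows "0 < s * order_sign i j k * det3 (y i) (y j) (y k)"
proof -
  have ordered: "0 < s * det3 (y a) (y b) (y c)" if "a < b" "b < c" "c < n" for a b c
    using oriented that unfolding uniformly_oriented_def by blast
  consider "i < j" "j < k" | "i < k" "k < j" | "j < i" "i < k"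
    | "j < k" "k < i" | "k < i" "i < j" | "k < j" "j < i"
    using assms(5-7) by linarith
  then show ?thesis
  proof cases
    case 1
    then show ?thesis
      using ordered[of i j k] assms by (simp add: order_sign_def)
  next
    case 2
    then show ?thesis
      using ordered[of i k j] assms det3_swap[of "y i" "y j" "y k"] by (simp add: order_sign_def)
  next
    case 3
    then show ?thesis
      using ordered[of j i k] assms det3_swap_left[of "y i" "y j" "y k"]
      by (simp add: order_sign_def)
  next
    case 4
    then show ?thesis
      using ordered[of j k i] assms det3_rotate[of "y j" "y k" "y i"] by (simp add: order_sign_def)
  next
    case 5
    then show ?thesis
      using ordered[of k i j] assms det3_rotate[of "y i" "y j" "y k"] by (simp add: order_sign_def)
  next
    case 6
    then show ?thesis
      using ordered[of k j i] assms det3_swap_left[of "y i" "y j" "y k"]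
        det3_rotate[of "y j" "y i" "y k"] by (simp add: order_sign_def)
  qed
qed

lemma uniformly_oriented_det3_nonzero:
  assumes "uniformly_oriented n s y"
    and "i < n" "j < n" "k < n" "i \<noteq> j" "j \<noteq> k" "i \<noteq> k"
  shows "det3 (y i) (y j) (y k) \<noteq> 0"
  using det3_order_sign[OF assms] by auto

lemma consecutive_vertices_same_side:
  assumes oriented: "uniformly_oriented n s y"
    and "u < n" "c < n" "d < n" "c \<noteq> d" "c \<noteq> u" "d \<noteq> u"
    and "c \<noteq> (u+1) mod n" "d \<noteq> (u+1) mod n"
  shows "0 < det3 (y c) (y d) (y u) * det3 (y c) (y d) (y ((u+1) mod n))"
proof -
  have same_sign: "order_sign c d ((u+1) mod n) = order_sign c d u"
    using assms(2-9) by (cases "u + 1 = n") (auto simp: order_sign_def)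
  have "0 < (s * order_sign c d u * det3 (y c) (y d) (y u))
      * (s * order_sign c d u * det3 (y c) (y d) (y ((u+1) mod n)))"
    using det3_order_sign[OF oriented, of c d u] det3_order_sign[OF oriented, of c d "(u+1) mod n"]
      assms(2-9) same_sign by (simp add: mult_pos_pos)
  also have "\<dots> = (s * order_sign c d u)\<^sup>2
      * (det3 (y c) (y d) (y u) * det3 (y c) (y d) (y ((u+1) mod n)))"
    by (simp add: power2_eq_square mult_ac)
  finally show ?thesis
    by (simp add: zero_less_mult_iff)
qed

lemma uniformly_oriented_conic_exists:
  assumes oriented: "uniformly_oriented n s y"
    and "{w, c, d, e, f} \<subseteq> {0..<n}" "distinct [w, c, d, e, f]"
  shows "\<exists>Q. conic_through Q {y w, y c, y d, y e, y f}"
proof -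
  have "det3 (y c) (y d) (y w) \<noteq> 0" "det3 (y e) (y f) (y w) \<noteq> 0"
    "det3 (y c) (y d) (y e) \<noteq> 0" "det3 (y c) (y d) (y f) \<noteq> 0"
    by (rule uniformly_oriented_det3_nonzero[OF oriented]; use assms(2,3) in auto)+
  then show ?thesis
    by (blast intro: pencil_conic_through)
qed

lemma consecutive_vertices_inside_exchange:
  assumes oriented: "uniformly_oriented n s y" and "u < n"
    and others: "{c, d, e, f} \<subseteq> {0..<n} - {u, (u+1) mod n}" "distinct [c, d, e, f]"
    and no_conic: "\<nexists>Q. conic_through Q {y u, y ((u+1) mod n), y c, y d, y e, y f}"
    and Q1: "conic_through Q1 {y ((u+1) mod n), y c, y d, y e, y f}"
    and Q2: "conic_through Q2 {y u, y c, y d, y e, y f}"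
  shows "inside_conic Q1 (y u) \<longleftrightarrow> \<not> inside_conic Q2 (y ((u+1) mod n))"
proof (rule inside_conic_exchange[OF no_conic Q1 Q2])
  show "det3 (y c) (y d) (y e) \<noteq> 0" "det3 (y c) (y d) (y f) \<noteq> 0"
    "det3 (y c) (y e) (y f) \<noteq> 0" "det3 (y d) (y e) (y f) \<noteq> 0"
    by (rule uniformly_oriented_det3_nonzero[OF oriented]; use others in auto)+
  have "0 < det3 (y a) (y b) (y u) * det3 (y a) (y b) (y ((u+1) mod n))"
    if "a \<in> {c, d, e, f}" "b \<in> {c, d, e, f}" "a \<noteq> b" for a b
    using that others \<open>u < n\<close> by (intro consecutive_vertices_same_side[OF oriented]) auto
  with others(2) show
    "0 < det3 (y c) (y d) (y u) * det3 (y c) (y d) (y ((u+1) mod n))"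
    "0 < det3 (y e) (y f) (y u) * det3 (y e) (y f) (y ((u+1) mod n))"
    "0 < det3 (y c) (y e) (y u) * det3 (y c) (y e) (y ((u+1) mod n))"
    "0 < det3 (y d) (y f) (y u) * det3 (y d) (y f) (y ((u+1) mod n))"
    "0 < det3 (y c) (y f) (y u) * det3 (y c) (y f) (y ((u+1) mod n))"
    "0 < det3 (y d) (y e) (y u) * det3 (y d) (y e) (y ((u+1) mod n))"
    by auto
qed

lemma card_4_obtain:
  assumes "card S = 4"
  obtains a b c d where "S = {a, b, c, d}" "distinct [a, b, c, d]"
proof -
  have "card S = Suc 3"
    using assms by simp
  then obtain a R where "S = insert a R" "a \<notin> R" "card R = 3"
    unfolding card_Suc_eq by blast
  then obtain b c d where "S = {a, b, c, d}" "distinct [a, b, c, d]"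
    by (auto simp: card_3_iff)
  then show thesis
    by (rule that)
qed

lemma Qc_conic_through:
  assumes "\<exists>Q. conic_through Q (p ` ({0..<7} - {i, j}))"
  shows "conic_through (Qc p i j) (p ` ({0..<7} - {i, j}))"
  using assms unfolding Qc_def by (rule someI_ex)

lemma dd_consecutive_complementary:
  assumes oriented: "uniformly_oriented 7 s y"
    and no_conic: "\<nexists>Q. conic_through Q (y ` ({0..<7} - {j}))"
    and "u < 7" "j < 7" "j \<noteq> u" "j \<noteq> (u+1) mod 7"
  shows "dd y u j + dd y ((u+1) mod 7) j = 1"
proof -
  define v where "v = (u+1) mod 7"
  have v: "v < 7" "v \<noteq> u" "v \<noteq> j"
    using assms(3-6) unfolding v_def by presburger+
  have "card ({0..<7} - {u, v, j}) = 4"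
    using assms(3-5) v by (simp add: card_Diff_subset)
  then obtain c d e f where others: "{0..<7} - {u, v, j} = {c, d, e, f}" "distinct [c, d, e, f]"
    by (rule card_4_obtain)
  have without_u: "{0..<7} - {u, j} = {v, c, d, e, f}"
    and without_v: "{0..<7} - {v, j} = {u, c, d, e, f}"
    and without_j: "{0..<7} - {j} = {u, v, c, d, e, f}"
    unfolding others(1)[symmetric] using assms(3-5) v by auto
  have range: "{c, d, e, f} \<subseteq> {0..<7} - {u, v}"
    unfolding others(1)[symmetric] by blast
  then have "{u, v, c, d, e, f} \<subseteq> {0..<7}" "distinct [u, v, c, d, e, f]"
    using others(2) v assms(3) by auto
  then have "conic_through (Qc y u j) {y v, y c, y d, y e, y f}"
    and "conic_through (Qc y v j) {y u, y c, y d, y e, y f}"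
    using Qc_conic_through[of y u j] Qc_conic_through[of y v j]
      uniformly_oriented_conic_exists[OF oriented, of v c d e f]
      uniformly_oriented_conic_exists[OF oriented, of u c d e f]
    unfolding without_u without_v by auto
  moreover have "\<nexists>Q. conic_through Q {y u, y v, y c, y d, y e, y f}"
    using no_conic unfolding without_j by simp
  ultimately have "inside_conic (Qc y u j) (y u) \<longleftrightarrow> \<not> inside_conic (Qc y v j) (y v)"
    using consecutive_vertices_inside_exchange[OF oriented \<open>u < 7\<close>, folded v_def, OF range others(2)]
    by blast
  then show ?thesis
    unfolding v_def dd_def by auto
qed

lemma typical7_no_conic_through_six:
  assumes "typical7 p" "j < 7"
  shows "\<nexists>Q. conic_through Q (p ` ({0..<7} - {j}))"
proof -
  have "card ({0..<7} - {j}) = 6"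
    using \<open>j < 7\<close> by simp
  with assms(1) show ?thesis
    unfolding typical7_def by blast
qed

lemma conic_through_rescale:
  assumes "\<forall>k\<in>S. c k \<noteq> 0"
  shows "conic_through Q ((\<lambda>k. c k *\<^sub>R p k) ` S) \<longleftrightarrow> conic_through Q (p ` S)"
  using assms by (auto simp: conic_through_def qf_scaleR_vector)

lemma dd_rescale:
  assumes "\<forall>k<7. c k \<noteq> 0" "u < 7"
  shows "dd (\<lambda>k. c k *\<^sub>R p k) u j = dd p u j"
proof -
  have "Qc (\<lambda>k. c k *\<^sub>R p k) u j = Qc p u j"
    unfolding Qc_def using assms(1) by (simp add: conic_through_rescale)
  with assms show ?thesis
    by (simp add: dd_def inside_conic_scaleR_point)
qed

lemma sum_remove_other:
  assumes "finite A" "a \<in> A" "b \<in> A" "a \<noteq> b"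
  shows "sum g (A - {a}) = g b + sum g (A - {a, b})"
proof -
  have "A - {a} = insert b (A - {a, b})"
    using assms(2-4) by auto
  then have "sum g (A - {a}) = sum g (insert b (A - {a, b}))"
    by (simp only:)
  also have "\<dots> = g b + sum g (A - {a, b})"
    using assms(1) by (intro sum.insert) auto
  finally show ?thesis .
qed

lemma sum_pair_complementary:
  fixes f :: "'a \<Rightarrow> 'a \<Rightarrow> nat"
  assumes "finite A" "a \<in> A" "b \<in> A" "a \<noteq> b"
    and complementary: "\<And>j. j \<in> A - {a, b} \<Longrightarrow> f a j + f b j = 1"
  shows "sum (f a) (A - {a}) + sum (f b) (A - {b}) = f a b + f b a + (card A - 2)"
proof -
  have "sum (f a) (A - {a}) = f a b + sum (f a) (A - {a, b})"
    using assms(1-4) by (rule sum_remove_other)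
  moreover have "sum (f b) (A - {b}) = f b a + sum (f b) (A - {a, b})"
    using sum_remove_other[of A b a "f b"] assms(1-4) by (simp add: insert_commute)
  moreover have "sum (f a) (A - {a, b}) + sum (f b) (A - {a, b}) = (\<Sum>j\<in>A - {a, b}. 1)"
    unfolding sum.distrib[symmetric] using complementary by (rule sum.cong[OF refl])
  moreover have "(\<Sum>j\<in>A - {a, b}. 1) = card A - 2"
    using assms(1-4) by (simp add: card_Diff_subset)
  ultimately show ?thesis
    by simp
qed

theorem lemma3p5:
  fixes p :: "nat \<Rightarrow> real^3" and i :: nat
  assumes "typical7 p" and "cyclic_heptagonal p" and "i < 7"
  shows "(internal_edge p i \<longrightarrow> dom_index p i + dom_index p ((i+1) mod 7) = 5) \<and>
         (external_edge p i \<longrightarrow> dom_index p i + dom_index p ((i+1) mod 7) = 7)"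
proof -
  obtain a where chart_defined: "\<forall>k<7. a \<bullet> p k \<noteq> 0" and edges: "\<forall>i<7.
      (\<forall>k<7. k \<noteq> i \<and> k \<noteq> (i+1) mod 7 \<longrightarrow>
        det3 (chart a (p i)) (chart a (p ((i+1) mod 7))) (chart a (p k)) > 0) \<or>
      (\<forall>k<7. k \<noteq> i \<and> k \<noteq> (i+1) mod 7 \<longrightarrow>
        det3 (chart a (p i)) (chart a (p ((i+1) mod 7))) (chart a (p k)) < 0)"
    using assms(2) unfolding cyclic_heptagonal_def by blast
  define y where "y = (\<lambda>k. (1 / (a \<bullet> p k)) *\<^sub>R p k)"
  obtain s where oriented: "uniformly_oriented 7 s y"
    using convex_polygon_uniformly_oriented[of 7 y] edges by (auto simp: y_def chart_def)
  have "dd p i j + dd p ((i+1) mod 7) j = 1" if "j < 7" "j \<noteq> i" "j \<noteq> (i+1) mod 7" for j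
  proof -
    have "\<nexists>Q. conic_through Q (y ` ({0..<7} - {j}))"
      using typical7_no_conic_through_six[OF assms(1) \<open>j < 7\<close>] chart_defined
      by (simp add: y_def conic_through_rescale)
    with that assms(3) have "dd y i j + dd y ((i+1) mod 7) j = 1"
      by (intro dd_consecutive_complementary[OF oriented])
    with chart_defined assms(3) show ?thesis
      by (simp add: y_def dd_rescale)
  qed
  moreover have "(i+1) mod 7 \<noteq> i"
    using assms(3) by presburger
  ultimately have "dom_index p i + dom_index p ((i+1) mod 7) =
      dd p i ((i+1) mod 7) + dd p ((i+1) mod 7) i + 5"
    unfolding dom_index_def using assms(3) by (subst sum_pair_complementary) auto
  then show ?thesis
    unfolding internal_edge_def external_edge_def by simp
qed

end
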